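(* Let $X=(v_j)_{j=1}^n$ be a sequence of unit vectors in $\mathbb{C}^d$ whose angles have real parts taking at most $s$ possible values (this includes designs with $2s$ angles, none of which is real). Then $$n=|X|\le\sum_{p+q\le s}\dim H(p,q)=\binom{s+2d-1}{2d-1}+\binom{s+2d-2}{2d-1}.$$
   Context: $\langle z,w\rangle=\sum_iz_i\overline{w_i}$. The angles of $X$ are the inner products $\langle v_j,v_k\rangle$ with $v_j\ne v_k$ (complex numbers $z$ with $|z|\le1$, $z\ne1$). $H(p,q)$ is the space of harmonic polynomials on $\mathbb{C}^d=\mathbb{R}^{2d}$ homogeneous of degree $p$ in $z_1,\ldots,z_d$ and of degree $q$ in $\overline{z_1},\ldots,\overline{z_d}$. *)

theory Defs
  imports "HOL-Analysis.Analysis"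
begin

definition cinner :: "complex^'d \<Rightarrow> complex^'d \<Rightarrow> complex" where
  "cinner z w = (\<Sum>i\<in>UNIV. z $ i * cnj (w $ i))"

definition angle_re_values :: "(nat \<Rightarrow> complex^'d) \<Rightarrow> nat \<Rightarrow> real set" where
  "angle_re_values v n =
     {Re (cinner (v j) (v k)) | j k. j < n \<and> k < n \<and> v j \<noteq> v k}"

end

theory Submission
  imports Defs "HOL-Library.Function_Algebras" "HOL-Library.Multiset"
begin

text \<open>
  Identify \<open>\<complex>\<^sup>d\<close> with \<open>\<real>\<^sup>2\<^sup>d\<close> and let \<open>A\<close> be the set of values \<open>Re \<langle>v\<^sub>j,v\<^sub>k\<rangle>\<close> with
  \<open>v\<^sub>j \<noteq> v\<^sub>k\<close>; as the \<open>v\<^sub>j\<close> are unit vectors, \<open>1 \<notin> A\<close>. The annihilator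
  \<open>f\<^sub>j(y) = \<Prod>\<^sub>a\<^sub>\<in>\<^sub>A (Re \<langle>v\<^sub>j,y\<rangle> - a) / (1 - a)\<close> is a real polynomial of degree at most \<open>s\<close>
  with \<open>f\<^sub>j(v\<^sub>k) = \<delta>\<^sub>j\<^sub>k\<close>. Since \<open>|y|\<^sup>2 = 1\<close> on the unit sphere, \<open>f\<^sub>j\<close> agrees there with a sum
  \<open>g\<^sub>j\<close> of homogeneous polynomials of degrees \<open>s\<close> and \<open>s - 1\<close>. The \<open>g\<^sub>j\<close> still satisfy
  \<open>g\<^sub>j(v\<^sub>k) = \<delta>\<^sub>j\<^sub>k\<close>, hence are linearly independent, so \<open>n\<close> is at most the number of
  monomials of degree \<open>s\<close> or \<open>s - 1\<close> in \<open>2d\<close> variables, which is the stated bound.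
\<close>

interpretation fun_space: vector_space "\<lambda>(c::real) (f::'a \<Rightarrow> real) x. c * f x"
  by unfold_locales (auto simp: fun_eq_iff algebra_simps)

lemma sum_fun_apply: "(sum f A) x = (\<Sum>a\<in>A. f a x)"
  by (induction A rule: infinite_finite_induct) auto

lemma card_le_card_if_delta_in_span:
  fixes g :: "nat \<Rightarrow> 'a \<Rightarrow> real"
  assumes "finite B"
    and span: "\<And>j. j < n \<Longrightarrow> g j \<in> fun_space.span B"
    and delta: "\<And>j k. j < n \<Longrightarrow> k < n \<Longrightarrow> g j (x k) = (if j = k then 1 else 0)"
  shows "n \<le> card B"
proof -
  have inj: "inj_on g {..<n}"
  proof (rule inj_onI)
    fix j k assume jk: "j \<in> {..<n}" "k \<in> {..<n}" and "g j = g k"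
    then have "g k (x j) = 1" using delta[of j j] by simp
    moreover have "g k (x j) = (if k = j then 1 else 0)" using jk delta by simp
    ultimately show "j = k" by (simp split: if_splits)
  qed
  have "fun_space.independent (g ` {..<n})"
  proof (rule fun_space.independent_if_scalars_zero)
    fix c h
    assume sum0: "(\<Sum>h\<in>g ` {..<n}. (\<lambda>y. c h * h y)) = 0" and "h \<in> g ` {..<n}"
    then obtain j where j: "j < n" "h = g j" by auto
    have "0 = (\<Sum>h\<in>g ` {..<n}. (\<lambda>y. c h * h y)) (x j)"
      using sum0 by simp
    also have "\<dots> = (\<Sum>k<n. c (g k) * g k (x j))"
      by (simp add: sum_fun_apply sum.reindex[OF inj])
    also have "\<dots> = (\<Sum>k<n. if k = j then c (g k) else 0)"
      using j delta by (intro sum.cong refl) auto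
    also have "\<dots> = c (g j)"
      using j by simp
    finally show "c h = 0" using j by simp
  qed simp
  then have "card (g ` {..<n}) \<le> card B"
    using fun_space.independent_span_bound[OF \<open>finite B\<close>] span by auto
  then show ?thesis using card_image[OF inj] by simp
qed

definition real_coord :: "'d \<times> bool \<Rightarrow> complex^'d \<Rightarrow> real" where
  "real_coord c z = (if snd c then Re (z $ fst c) else Im (z $ fst c))"

definition real_monomial :: "('d \<times> bool) multiset \<Rightarrow> complex^'d \<Rightarrow> real" where
  "real_monomial M z = (\<Prod>c\<in>#M. real_coord c z)"

definition homog_monomials :: "nat \<Rightarrow> (complex^'d \<Rightarrow> real) set" where
  "homog_monomials e = real_monomial ` multisets_of_size UNIV e"

definition homog_polys :: "nat \<Rightarrow> (complex^'d \<Rightarrow> real) set" where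
  "homog_polys e = fun_space.span (homog_monomials e)"

lemma finite_homog_monomials: "finite (homog_monomials e)"
  by (simp add: homog_monomials_def finite_multisets_of_size)

lemma card_homog_monomials_le:
  "card (homog_monomials e :: (complex^'d \<Rightarrow> real) set) \<le> (2 * CARD('d) + e - 1) choose e"
proof -
  have "card (homog_monomials e :: (complex^'d \<Rightarrow> real) set)
      \<le> card (multisets_of_size (UNIV :: ('d \<times> bool) set) e)"
    unfolding homog_monomials_def by (rule card_image_le) (simp add: finite_multisets_of_size)
  also have "\<dots> = (2 * CARD('d) + e - 1) choose e"
    by (simp add: card_multisets_of_size card_UNIV_bool mult.commute)
  finally show ?thesis .
qed

lemma homog_polys_add: "f \<in> homog_polys e \<Longrightarrow> g \<in> homog_polys e \<Longrightarrow> f + g \<in> homog_polys e"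
  unfolding homog_polys_def by (rule fun_space.span_add)

lemma homog_polys_scale: "f \<in> homog_polys e \<Longrightarrow> (\<lambda>y. c * f y) \<in> homog_polys e"
  unfolding homog_polys_def by (rule fun_space.span_scale)

lemma homog_polys_sum:
  "finite I \<Longrightarrow> (\<And>i. i \<in> I \<Longrightarrow> f i \<in> homog_polys e) \<Longrightarrow> sum f I \<in> homog_polys e"
  unfolding homog_polys_def by (rule fun_space.span_sum)

lemma zero_in_homog_polys: "0 \<in> homog_polys e"
  unfolding homog_polys_def by (rule fun_space.span_zero)

lemma real_monomial_in_homog_polys: "size M = e \<Longrightarrow> real_monomial M \<in> homog_polys e"
  unfolding homog_polys_def homog_monomials_def multisets_of_size_def
  by (intro fun_space.span_base) auto

lemma const_in_homog_polys: "(\<lambda>_. c) \<in> homog_polys 0"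
  using homog_polys_scale[OF real_monomial_in_homog_polys[of "{#}" 0], of c]
  by (simp add: real_monomial_def)

lemma real_coord_in_homog_polys: "real_coord c \<in> homog_polys 1"
proof -
  have "real_monomial {#c#} = real_coord c"
    by (simp add: real_monomial_def fun_eq_iff)
  then show ?thesis
    using real_monomial_in_homog_polys[of "{#c#}" 1] by simp
qed

lemma homog_polys_mult:
  fixes f g :: "complex^'d \<Rightarrow> real"
  assumes "f \<in> homog_polys a" "g \<in> homog_polys b"
  shows "f * g \<in> homog_polys (a + b)"
proof -
  obtain u where u: "f = (\<Sum>m\<in>homog_monomials a. (\<lambda>y. u m * m y))"
    using assms(1) fun_space.span_finite[OF finite_homog_monomials]
    unfolding homog_polys_def by auto
  obtain w where w: "g = (\<Sum>m\<in>homog_monomials b. (\<lambda>y. w m * m y))"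
    using assms(2) fun_space.span_finite[OF finite_homog_monomials]
    unfolding homog_polys_def by auto
  have "f * g = (\<Sum>m\<in>homog_monomials a. \<Sum>m'\<in>homog_monomials b. (\<lambda>y. (u m * w m') * (m * m') y))"
    unfolding u w by (simp add: fun_eq_iff sum_fun_apply sum_product algebra_simps)
  also have "\<dots> \<in> homog_polys (a + b)"
  proof (intro homog_polys_sum homog_polys_scale finite_homog_monomials)
    fix m m' :: "complex^'d \<Rightarrow> real"
    assume "m \<in> homog_monomials a" "m' \<in> homog_monomials b"
    then obtain M M' where "size M = a" "size M' = b" "m = real_monomial M" "m' = real_monomial M'"
      by (auto simp: homog_monomials_def multisets_of_size_def)
    moreover have "real_monomial M * real_monomial M' = real_monomial (M + M')"
      by (simp add: real_monomial_def fun_eq_iff)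
    ultimately show "m * m' \<in> homog_polys (a + b)"
      by (simp add: real_monomial_in_homog_polys)
  qed
  finally show ?thesis .
qed

lemma sum_UNIV_prod_bool:
  fixes F :: "'d \<times> bool \<Rightarrow> real"
  shows "(\<Sum>c\<in>UNIV. F c) = (\<Sum>i\<in>UNIV. F (i, True) + F (i, False))"
proof -
  have "(\<Sum>c\<in>UNIV. F c) = (\<Sum>i\<in>UNIV. \<Sum>b\<in>UNIV. F (i, b))"
    by (simp add: UNIV_Times_UNIV[symmetric] sum.cartesian_product del: UNIV_Times_UNIV)
  then show ?thesis by (simp add: UNIV_bool add.commute)
qed

lemma re_cinner_eq_sum_real_coord:
  "Re (cinner x y) = (\<Sum>c\<in>UNIV. real_coord c x * real_coord c y)"
  by (simp add: cinner_def Re_sum sum_UNIV_prod_bool real_coord_def)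

lemma norm_power2_eq_sum_real_coord:
  fixes x :: "complex^'d"
  shows "(norm x)\<^sup>2 = (\<Sum>c\<in>UNIV. real_coord c x * real_coord c x)"
proof -
  have "(norm x)\<^sup>2 = (\<Sum>i\<in>UNIV. (cmod (x $ i))\<^sup>2)"
    by (simp add: norm_vec_def L2_set_def sum_nonneg)
  also have "\<dots> = (\<Sum>i\<in>UNIV. (Re (x $ i))\<^sup>2 + (Im (x $ i))\<^sup>2)"
    by (simp add: cmod_power2)
  finally show ?thesis
    by (simp add: sum_UNIV_prod_bool real_coord_def power2_eq_square)
qed

lemma re_cinner_self: "Re (cinner x x) = (norm x)\<^sup>2"
  by (simp add: re_cinner_eq_sum_real_coord norm_power2_eq_sum_real_coord)

lemma re_cinner_in_homog_polys: "(\<lambda>y. Re (cinner x y)) \<in> homog_polys 1"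
proof -
  have "(\<lambda>y. Re (cinner x y)) = (\<Sum>c\<in>UNIV. (\<lambda>y. real_coord c x * real_coord c y))"
    by (simp add: fun_eq_iff sum_fun_apply re_cinner_eq_sum_real_coord)
  also have "\<dots> \<in> homog_polys 1"
    by (intro homog_polys_sum homog_polys_scale real_coord_in_homog_polys) auto
  finally show ?thesis .
qed

lemma norm_power2_in_homog_polys: "(\<lambda>y::complex^'d. (norm y)\<^sup>2) \<in> homog_polys 2"
proof -
  have "(\<lambda>y::complex^'d. (norm y)\<^sup>2) = (\<Sum>c\<in>UNIV. real_coord c * real_coord c)"
    by (simp add: fun_eq_iff sum_fun_apply norm_power2_eq_sum_real_coord)
  also have "\<dots> \<in> homog_polys 2"
    using homog_polys_mult[OF real_coord_in_homog_polys real_coord_in_homog_polys]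
    by (intro homog_polys_sum) (auto simp: numeral_2_eq_2)
  finally show ?thesis .
qed

lemma eq_if_re_cinner_eq_1:
  fixes z w :: "complex^'d"
  assumes "norm z = 1" "norm w = 1" "Re (cinner z w) = 1"
  shows "z = w"
proof -
  have "(\<Sum>c\<in>UNIV. (real_coord c z - real_coord c w)\<^sup>2)
      = (norm z)\<^sup>2 + (norm w)\<^sup>2 - 2 * Re (cinner z w)"
    unfolding norm_power2_eq_sum_real_coord re_cinner_eq_sum_real_coord
    by (simp add: power2_eq_square algebra_simps sum_subtractf sum.distrib sum_distrib_left)
  also have "\<dots> = 0" using assms by simp
  finally have "real_coord c z = real_coord c w" for c
    using sum_nonneg_eq_0_iff[of UNIV "\<lambda>c. (real_coord c z - real_coord c w)\<^sup>2"]
    by (simp del: split_paired_All)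
  then have "z $ i = w $ i" for i
    using complex_eqI[of "z $ i" "w $ i"] by (metis real_coord_def fst_conv snd_conv)
  then show ?thesis by (simp add: vec_eq_iff)
qed

text \<open>
  A polynomial of degree at most \<open>m\<close>, restricted to the unit sphere. Multiplying by
  \<open>|y|\<^sup>2 = 1\<close> raises the degree of a homogeneous part by two, so on the sphere only the
  parts of degree \<open>m\<close> and \<open>m - 1\<close> are needed (for \<open>m = 0\<close> both are constants).
\<close>
definition sphere_poly :: "nat \<Rightarrow> (complex^'d \<Rightarrow> real) \<Rightarrow> bool" where
  "sphere_poly m h \<longleftrightarrow>
     (\<exists>p\<in>homog_polys m. \<exists>q\<in>homog_polys (m - 1). \<forall>y. norm y = 1 \<longrightarrow> h y = p y + q y)"

lemma sphere_polyI:
  assumes "p \<in> homog_polys m" "q \<in> homog_polys (m - 1)" "\<And>y. norm y = 1 \<Longrightarrow> h y = p y + q y"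
  shows "sphere_poly m h"
  using assms unfolding sphere_poly_def by blast

lemma sphere_polyE:
  assumes "sphere_poly m h"
  obtains p q where "p \<in> homog_polys m" "q \<in> homog_polys (m - 1)"
    "\<And>y. norm y = 1 \<Longrightarrow> h y = p y + q y"
  using assms unfolding sphere_poly_def by blast

lemma sphere_poly_const: "sphere_poly 0 (\<lambda>_. c)"
  by (rule sphere_polyI[OF const_in_homog_polys zero_in_homog_polys]) simp

lemma sphere_poly_Suc:
  assumes "sphere_poly m h"
  shows "sphere_poly (Suc m) h"
proof -
  obtain p q where p: "p \<in> homog_polys m" and q: "q \<in> homog_polys (m - 1)"
    and h: "\<And>y. norm y = 1 \<Longrightarrow> h y = p y + q y"
    using assms by (elim sphere_polyE) blast
  show ?thesis
  proof (cases "m = 0")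
    case True
    then have "p + q \<in> homog_polys (Suc m - 1)"
      using p q by (simp add: homog_polys_add)
    with zero_in_homog_polys show ?thesis
      by (rule sphere_polyI) (simp add: h)
  next
    case False
    then have "(\<lambda>y. (norm y)\<^sup>2) * q \<in> homog_polys (Suc m)"
      using homog_polys_mult[OF norm_power2_in_homog_polys q] by simp
    moreover have "p \<in> homog_polys (Suc m - 1)"
      using p by simp
    ultimately show ?thesis
      by (rule sphere_polyI) (simp add: h)
  qed
qed

lemma sphere_poly_mono: "m \<le> k \<Longrightarrow> sphere_poly m h \<Longrightarrow> sphere_poly k h"
  by (induction k rule: dec_induct) (auto intro: sphere_poly_Suc)

lemma sphere_poly_affine_mult:
  assumes "sphere_poly m h" and l: "l \<in> homog_polys 1"
  shows "sphere_poly (Suc m) (\<lambda>y. (l y + \<beta>) * h y)"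
proof -
  obtain p q where p: "p \<in> homog_polys m" and q: "q \<in> homog_polys (m - 1)"
    and h: "\<And>y. norm y = 1 \<Longrightarrow> h y = p y + q y"
    using assms(1) by (elim sphere_polyE) blast
  show ?thesis
  proof (cases "m = 0")
    case True
    then have r: "p + q \<in> homog_polys 0"
      using p q by (simp add: homog_polys_add)
    have "l * (p + q) \<in> homog_polys (Suc m)"
      using homog_polys_mult[OF l r] True by simp
    moreover have "(\<lambda>y. \<beta> * (p + q) y) \<in> homog_polys (Suc m - 1)"
      using homog_polys_scale[OF r] True by simp
    ultimately show ?thesis
      by (rule sphere_polyI) (simp add: h algebra_simps)
  next
    case False
    let ?N = "\<lambda>y::complex^'d. (norm y)\<^sup>2"
    have lp: "l * p \<in> homog_polys (Suc m)" and Nq: "?N * q \<in> homog_polys (Suc m)"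
      and lq: "l * q \<in> homog_polys (Suc m - 1)"
      using homog_polys_mult[OF l p] homog_polys_mult[OF norm_power2_in_homog_polys q]
        homog_polys_mult[OF l q] False by simp_all
    have "l * p + (\<lambda>y. \<beta> * (?N * q) y) \<in> homog_polys (Suc m)"
      by (intro homog_polys_add homog_polys_scale lp Nq)
    moreover have "l * q + (\<lambda>y. \<beta> * p y) \<in> homog_polys (Suc m - 1)"
      using p by (intro homog_polys_add homog_polys_scale lq) simp
    ultimately show ?thesis
      by (rule sphere_polyI) (simp add: h algebra_simps)
  qed
qed

lemma sphere_poly_in_span:
  assumes "sphere_poly m h"
  obtains g where "g \<in> fun_space.span (homog_monomials m \<union> homog_monomials (m - 1))"
    and "\<And>y. norm y = 1 \<Longrightarrow> h y = g y"
proof -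
  let ?S = "fun_space.span (homog_monomials m \<union> homog_monomials (m - 1))"
  obtain p q where "p \<in> homog_polys m" "q \<in> homog_polys (m - 1)"
    and h: "\<And>y. norm y = 1 \<Longrightarrow> h y = p y + q y"
    using assms by (elim sphere_polyE) blast
  moreover have "homog_polys m \<subseteq> ?S" "homog_polys (m - 1) \<subseteq> ?S"
    unfolding homog_polys_def by (simp_all add: fun_space.span_mono)
  ultimately have "p + q \<in> ?S"
    by (blast intro: fun_space.span_add)
  with h show ?thesis using that by simp
qed

definition annihilator :: "real set \<Rightarrow> complex^'d \<Rightarrow> complex^'d \<Rightarrow> real" where
  "annihilator A x y = (\<Prod>a\<in>A. (Re (cinner x y) - a) / (1 - a))"

lemma sphere_poly_annihilator:
  assumes "finite A"
  shows "sphere_poly (card A) (annihilator A x)"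
  using assms unfolding annihilator_def
proof (induction A rule: finite_induct)
  case empty
  show ?case using sphere_poly_const by simp
next
  case (insert a A)
  have "(\<lambda>y. (1 / (1 - a)) * Re (cinner x y)) \<in> homog_polys 1"
    by (intro homog_polys_scale re_cinner_in_homog_polys)
  from sphere_poly_affine_mult[OF insert.IH this, of "- a / (1 - a)"] insert.hyps
  show ?case by (simp add: diff_divide_distrib)
qed

lemma annihilator_eq_0: "finite A \<Longrightarrow> Re (cinner x y) \<in> A \<Longrightarrow> annihilator A x y = 0"
  unfolding annihilator_def by (subst prod_zero_iff) auto

lemma annihilator_self: "norm x = 1 \<Longrightarrow> 1 \<notin> A \<Longrightarrow> annihilator A x x = 1"
  unfolding annihilator_def re_cinner_self by (intro prod.neutral) auto

lemma finite_angle_re_values: "finite (angle_re_values v n)"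
proof (rule finite_subset)
  show "angle_re_values v n \<subseteq> (\<lambda>(j, k). Re (cinner (v j) (v k))) ` ({..<n} \<times> {..<n})"
    by (auto simp: angle_re_values_def)
qed simp

lemma one_notin_angle_re_values:
  assumes "\<And>j. j < n \<Longrightarrow> norm (v j) = 1"
  shows "1 \<notin> angle_re_values v n"
  using assms eq_if_re_cinner_eq_1 by (fastforce simp: angle_re_values_def)

lemma annihilator_angle_re_values:
  assumes "inj_on v {..<n}" "\<And>j. j < n \<Longrightarrow> norm (v j) = 1" "j < n" "k < n"
  shows "annihilator (angle_re_values v n) (v j) (v k) = (if j = k then 1 else 0)"
proof (cases "j = k")
  case True
  then show ?thesis
    using assms(2,3) one_notin_angle_re_values[OF assms(2)] by (simp add: annihilator_self)
next
  case False
  then have "Re (cinner (v j) (v k)) \<in> angle_re_values v n"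
    using assms(1,3,4) by (auto simp: angle_re_values_def dest: inj_onD)
  then show ?thesis
    using False by (simp add: annihilator_eq_0 finite_angle_re_values)
qed

lemma choose_add_sub_1_symmetric: "1 \<le> N \<Longrightarrow> (N + e - 1) choose e = (e + N - 1) choose (N - 1)"
  using binomial_symmetric[of e "N + e - 1"] by (simp add: add.commute)

lemma card_homog_monomials_two_degrees_le:
  "card (homog_monomials s \<union> homog_monomials (s - 1) :: (complex^'d \<Rightarrow> real) set)
     \<le> ((s + 2 * CARD('d) - 1) choose (2 * CARD('d) - 1))
       + ((s + 2 * CARD('d) - 2) choose (2 * CARD('d) - 1))"
proof (cases "s = 0")
  case True
  then show ?thesis
    using card_homog_monomials_le[of 0, where 'd = 'd] by simp
next
  case False
  have "card (homog_monomials s \<union> homog_monomials (s - 1) :: (complex^'d \<Rightarrow> real) set)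
      \<le> card (homog_monomials s :: (complex^'d \<Rightarrow> real) set)
        + card (homog_monomials (s - 1) :: (complex^'d \<Rightarrow> real) set)"
    by (rule card_Un_le)
  also have "\<dots> \<le> ((2 * CARD('d) + s - 1) choose s) + ((2 * CARD('d) + (s - 1) - 1) choose (s - 1))"
    by (intro add_mono card_homog_monomials_le)
  also have "\<dots> = ((s + 2 * CARD('d) - 1) choose (2 * CARD('d) - 1))
      + ((s - 1 + 2 * CARD('d) - 1) choose (2 * CARD('d) - 1))"
    using choose_add_sub_1_symmetric[of "2 * CARD('d)"] by simp
  also have "s - 1 + 2 * CARD('d) - 1 = s + 2 * CARD('d) - 2"
    using False by simp
  finally show ?thesis .
qed

theorem theorem10p5:
  fixes v :: "nat \<Rightarrow> complex^'d" and n s :: nat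
  assumes "inj_on v {..<n}"
    and "\<And>j. j < n \<Longrightarrow> norm (v j) = 1"
    and "card (angle_re_values v n) \<le> s"
  shows "n \<le> ((s + 2 * CARD('d) - 1) choose (2 * CARD('d) - 1))
             + ((s + 2 * CARD('d) - 2) choose (2 * CARD('d) - 1))"
proof -
  let ?A = "angle_re_values v n"
  let ?B = "homog_monomials s \<union> homog_monomials (s - 1) :: (complex^'d \<Rightarrow> real) set"
  have "sphere_poly s (annihilator ?A (v j))" for j
    by (rule sphere_poly_mono[OF assms(3) sphere_poly_annihilator[OF finite_angle_re_values]])
  then have "\<forall>j. \<exists>g. g \<in> fun_space.span ?B \<and> (\<forall>y. norm y = 1 \<longrightarrow> annihilator ?A (v j) y = g y)"
    by (metis sphere_poly_in_span)
  then obtain g where g_span: "\<And>j. g j \<in> fun_space.span ?B"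
    and g_eq: "\<And>j y. norm y = 1 \<Longrightarrow> annihilator ?A (v j) y = g j y"
    by metis
  have delta: "g j (v k) = (if j = k then 1 else 0)" if "j < n" "k < n" for j k
    using g_eq[OF assms(2)[OF \<open>k < n\<close>]] annihilator_angle_re_values[OF assms(1,2) that]
    by simp
  have "n \<le> card ?B"
    by (rule card_le_card_if_delta_in_span[OF _ g_span delta]) (simp add: finite_homog_monomials)
  then show ?thesis
    using card_homog_monomials_two_degrees_le[of s, where 'd = 'd] by linarith
qed

end
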